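(* Let $G=(V,E,w)$ be any weighted undirected graph, $\beta\in(0,1)$, and $\mathcal T$ a $\beta$-balanced HC-tree of $G$. Define $$W(G):=\sum_{\substack{\text{internal nodes } u \text{ of } \mathcal T\\ (A,B):=\mathrm{cut}(\mathcal T[u])}}\frac12\big(w(A,\bar A)+w(B,\bar B)\big)\cdot|A\cup B|.$$ Then $C_G(\mathcal T)\le W(G)\le \frac1\beta\, C_G(\mathcal T)$.
   Context: Let $G=(V,E,w)$ be an undirected graph with nonnegative edge weights $w$. A hierarchical clustering tree (HC-tree) of $G$ is a rooted tree $\mathcal T$ whose leaves are in bijection with $V$. For a node $z$, $\mathcal T[z]$ is the subtree rooted at $z$ and $\mathrm{leaves}(\mathcal T[z])\subseteq V$ its set of leaves. For $u,v\in V$, $u\vee v$ denotes their lowest common ancestor in $\mathcal T$. The cost of $\mathcal T$ on $G$ is $C_G(\mathcal T)=\sum_{(u,v)\in E} w(u,v)\,|\mathrm{leaves}(\mathcal T[u\vee v])|$. For disjoint $A,B\subseteq V$, $w(A,B)$ denotes the total weight of edges with one endpoint in $A$ and the other in $B$, and $\bar A=V\setminus A$. If $\mathcal T$ is binary and $z$ is an internal node with children $z_1,z_2$, where $|\mathrm{leaves}(\mathcal T[z_1])|\le|\mathrm{leaves}(\mathcal T[z_2])|$, then $\mathrm{cut}(\mathcal T[z]):=(A,B)$ with $A=\mathrm{leaves}(\mathcal T[z_1])$, $B=\mathrm{leaves}(\mathcal T[z_2])$. For $0<\beta<1$, a pair of disjoint sets $(A,B)$ is $\beta$-balanced if $\max\{|A|,|B|\}\le(1-\beta)|A\cup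 B|$; a binary HC-tree is $\beta$-balanced if $\mathrm{cut}(\mathcal T[z])$ is $\beta$-balanced for every internal node $z$. *)

theory Defs
  imports Complex_Main
begin

datatype 'a hctree = Leaf 'a | Node "'a hctree" "'a hctree"

fun leaves_list :: "'a hctree \<Rightarrow> 'a list" where
  "leaves_list (Leaf v) = [v]"
| "leaves_list (Node l r) = leaves_list l @ leaves_list r"

definition leaves :: "'a hctree \<Rightarrow> 'a set" where
  "leaves T = set (leaves_list T)"

definition is_hctree :: "'a set \<Rightarrow> 'a hctree \<Rightarrow> bool" where
  "is_hctree V T \<longleftrightarrow> distinct (leaves_list T) \<and> leaves T = V"

definition wgraph :: "'a set \<Rightarrow> 'a set set \<Rightarrow> ('a set \<Rightarrow> real) \<Rightarrow> bool" where
  "wgraph V E w \<longleftrightarrow> finite V \<and> (\<forall>e\<in>E. e \<subseteq> V \<and> card e = 2) \<and> (\<forall>e\<in>E. w e \<ge> 0)"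

fun lca_size :: "'a hctree \<Rightarrow> 'a set \<Rightarrow> nat" where
  "lca_size (Leaf v) e = 1"
| "lca_size (Node l r) e =
     (if e \<subseteq> leaves l then lca_size l e
      else if e \<subseteq> leaves r then lca_size r e
      else card (leaves (Node l r)))"

definition hc_cost :: "'a set set \<Rightarrow> ('a set \<Rightarrow> real) \<Rightarrow> 'a hctree \<Rightarrow> real" where
  "hc_cost E w T = (\<Sum>e\<in>E. w e * real (lca_size T e))"

definition wcut :: "'a set set \<Rightarrow> ('a set \<Rightarrow> real) \<Rightarrow> 'a set \<Rightarrow> 'a set \<Rightarrow> real" where
  "wcut E w A B = (\<Sum>e\<in>{e\<in>E. e \<inter> A \<noteq> {} \<and> e \<inter> B \<noteq> {}}. w e)"

definition cut_of :: "'a hctree \<Rightarrow> 'a hctree \<Rightarrow> 'a set \<times> 'a set" where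
  "cut_of l r = (if card (leaves l) \<le> card (leaves r) then (leaves l, leaves r)
                 else (leaves r, leaves l))"

definition balanced_pair :: "real \<Rightarrow> 'a set \<times> 'a set \<Rightarrow> bool" where
  "balanced_pair \<beta> AB = (case AB of (A, B) \<Rightarrow>
     real (max (card A) (card B)) \<le> (1 - \<beta>) * real (card (A \<union> B)))"

fun beta_balanced :: "real \<Rightarrow> 'a hctree \<Rightarrow> bool" where
  "beta_balanced \<beta> (Leaf v) = True"
| "beta_balanced \<beta> (Node l r) =
     (balanced_pair \<beta> (cut_of l r) \<and> beta_balanced \<beta> l \<and> beta_balanced \<beta> r)"

fun Wsum :: "'a set \<Rightarrow> 'a set set \<Rightarrow> ('a set \<Rightarrow> real) \<Rightarrow> 'a hctree \<Rightarrow> real" where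
  "Wsum V E w (Leaf v) = 0"
| "Wsum V E w (Node l r) =
     (case cut_of l r of (A, B) \<Rightarrow>
        (1/2) * (wcut E w A (V - A) + wcut E w B (V - B)) * real (card (A \<union> B)))
     + Wsum V E w l + Wsum V E w r"

end

theory Submission
  imports Defs
begin

text \<open>Exchanging the order of summation, W(G) is the sum over edges e of w(e) times a charge:
  an internal node u pays |leaves u|/2 for each of its two children that e separates
  from the rest of V. At the lowest common ancestor of e both children are separated,
  giving |leaves u| = the cost contribution of e, so the charge is at least the cost.
  Below it, e only crosses the nodes on the two paths towards its endpoints, each paying half
  its size; by balance these sizes shrink geometrically by the factor 1 - \<beta>, so each path
  contributes at most (1 - \<beta>)/(2\<beta>) times the size of the lca, and the charge is at most
  1/\<beta> times the cost.\<close>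

lemma leaves_Leaf [simp]: "leaves (Leaf v) = {v}"
  by (simp add: leaves_def)

lemma leaves_Node [simp]: "leaves (Node l r) = leaves l \<union> leaves r"
  by (simp add: leaves_def)

lemma finite_leaves [simp]: "finite (leaves T)"
  by (simp add: leaves_def)

lemma set_leaves_list [simp]: "set (leaves_list T) = leaves T"
  by (simp add: leaves_def)

lemma beta_balanced_Node_card_leaves:
  assumes "beta_balanced \<beta> (Node l r)"
  shows "real (card (leaves l)) \<le> (1 - \<beta>) * real (card (leaves (Node l r)))"
    and "real (card (leaves r)) \<le> (1 - \<beta>) * real (card (leaves (Node l r)))"
  using assms by (auto simp: balanced_pair_def cut_of_def max_def Un_commute split: if_splits)

definition separates :: "'a set \<Rightarrow> 'a set \<Rightarrow> bool" where
  "separates A e \<longleftrightarrow> e \<inter> A \<noteq> {} \<and> \<not> e \<subseteq> A"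

fun cut_charge :: "'a hctree \<Rightarrow> 'a set \<Rightarrow> real" where
  "cut_charge (Leaf v) e = 0"
| "cut_charge (Node l r) e =
     (of_bool (separates (leaves l) e) + of_bool (separates (leaves r) e)) / 2
       * real (card (leaves (Node l r))) + cut_charge l e + cut_charge r e"

lemma wcut_compl_eq_sum_separates:
  assumes "finite E" and "\<forall>e\<in>E. e \<subseteq> V"
  shows "wcut E w A (V - A) = (\<Sum>e\<in>E. w e * of_bool (separates A e))"
proof -
  have "{e \<in> E. e \<inter> A \<noteq> {} \<and> e \<inter> (V - A) \<noteq> {}} = {e \<in> E. separates A e}"
    using assms(2) by (auto simp: separates_def)
  then have "wcut E w A (V - A) = (\<Sum>e\<in>E. if separates A e then w e else 0)"
    using assms(1) by (simp add: wcut_def sum.inter_filter)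
  also have "\<dots> = (\<Sum>e\<in>E. w e * of_bool (separates A e))"
    by (intro sum.cong) auto
  finally show ?thesis .
qed

lemma Wsum_eq_sum_cut_charge:
  assumes "finite E" and "\<forall>e\<in>E. e \<subseteq> V"
  shows "Wsum V E w T = (\<Sum>e\<in>E. w e * cut_charge T e)"
proof (induction T)
  case (Node l r)
  let ?L = "real (card (leaves (Node l r)))"
  have "wcut E w (leaves l) (V - leaves l) + wcut E w (leaves r) (V - leaves r)
        = (\<Sum>e\<in>E. w e * (of_bool (separates (leaves l) e) + of_bool (separates (leaves r) e)))"
    by (simp add: wcut_compl_eq_sum_separates[OF assms] sum.distrib distrib_left)
  then have "(case cut_of l r of (A, B) \<Rightarrow>
          1/2 * (wcut E w A (V - A) + wcut E w B (V - B)) * real (card (A \<union> B)))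
        = (\<Sum>e\<in>E. w e * ((of_bool (separates (leaves l) e) + of_bool (separates (leaves r) e))
             / 2 * ?L))"
    by (auto simp: cut_of_def Un_commute add.commute sum_distrib_right mult.assoc)
  with Node show ?case
    by (simp add: sum.distrib distrib_left)
qed simp

lemma cut_charge_nonneg: "0 \<le> cut_charge T e"
  by (induction T) auto

lemma cut_charge_outside: "e \<inter> leaves T = {} \<Longrightarrow> cut_charge T e = 0"
  by (induction T) (auto simp: separates_def Int_Un_distrib)

lemma cut_charge_Node_commute: "cut_charge (Node l r) e = cut_charge (Node r l) e"
  by (simp add: Un_commute algebra_simps)

lemma cut_charge_Node_within:
  "e \<subseteq> leaves l \<Longrightarrow> e \<inter> leaves r = {} \<Longrightarrow> cut_charge (Node l r) e = cut_charge l e"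
  by (simp add: separates_def cut_charge_outside)

lemma cut_charge_Node_one_end:
  assumes "e \<inter> leaves l \<noteq> {}" and "\<not> e \<subseteq> leaves l" and "e \<inter> leaves r = {}"
  shows "cut_charge (Node l r) e = real (card (leaves (Node l r))) / 2 + cut_charge l e"
  using assms by (simp add: separates_def cut_charge_outside)

lemma cut_charge_Node_split:
  assumes "e \<inter> leaves l \<noteq> {}" and "e \<inter> leaves r \<noteq> {}" and "leaves l \<inter> leaves r = {}"
  shows "cut_charge (Node l r) e =
           real (card (leaves (Node l r))) + cut_charge l e + cut_charge r e"
proof -
  have "separates (leaves l) e" "separates (leaves r) e"
    using assms by (auto simp: separates_def)
  then show ?thesis by simp
qed

lemma half_plus_balanced_child_le:
  fixes \<beta> L c :: real
  assumes "0 < \<beta>" and "c \<le> (1 - \<beta>) * L"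
  shows "L / 2 + c / (2 * \<beta>) \<le> L / (2 * \<beta>)"
proof -
  have "c / (2 * \<beta>) \<le> (1 - \<beta>) * L / (2 * \<beta>)"
    using assms by (simp add: divide_right_mono)
  also have "\<dots> = L / (2 * \<beta>) - L / 2"
    using assms(1) by (simp add: field_simps)
  finally show ?thesis by simp
qed

lemma cut_charge_one_end_le:
  assumes "distinct (leaves_list T)" and "beta_balanced \<beta> T" and "0 < \<beta>"
    and "x \<in> leaves T" and "y \<notin> leaves T"
  shows "cut_charge T {x, y} \<le> real (card (leaves T)) / (2 * \<beta>)"
  using assms
proof (induction T)
  case (Node l r)
  let ?L = "real (card (leaves (Node l r)))"
  have bound: "?L / 2 + cut_charge c {x, y} \<le> ?L / (2 * \<beta>)"
    if "c \<in> {l, r}" and "x \<in> leaves c" for c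
  proof -
    have "cut_charge c {x, y} \<le> real (card (leaves c)) / (2 * \<beta>)"
      using that Node by auto
    moreover have "real (card (leaves c)) \<le> (1 - \<beta>) * ?L"
      using that beta_balanced_Node_card_leaves[OF Node.prems(2)] by auto
    ultimately show ?thesis
      using half_plus_balanced_child_le[OF Node.prems(3)] by fastforce
  qed
  show ?case
  proof (cases "x \<in> leaves l")
    case True
    then have "cut_charge (Node l r) {x, y} = ?L / 2 + cut_charge l {x, y}"
      using Node.prems by (intro cut_charge_Node_one_end) auto
    also have "\<dots> \<le> ?L / (2 * \<beta>)"
      using True by (intro bound) auto
    finally show ?thesis .
  next
    case False
    then have "x \<in> leaves r"
      using Node.prems(4) by simp
    have "cut_charge (Node l r) {x, y} = cut_charge (Node r l) {x, y}"
      by (rule cut_charge_Node_commute)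
    also have "\<dots> = real (card (leaves (Node r l))) / 2 + cut_charge r {x, y}"
      using False \<open>x \<in> leaves r\<close> Node.prems(5) by (intro cut_charge_Node_one_end) auto
    also have "\<dots> = ?L / 2 + cut_charge r {x, y}"
      by (simp add: Un_commute)
    also have "\<dots> \<le> ?L / (2 * \<beta>)"
      using \<open>x \<in> leaves r\<close> by (intro bound) auto
    finally show ?thesis .
  qed
qed simp

lemma lca_size_le_cut_charge:
  assumes "distinct (leaves_list T)" and "e \<subseteq> leaves T" and "2 \<le> card e"
  shows "real (lca_size T e) \<le> cut_charge T e"
  using assms
proof (induction T)
  case (Leaf v)
  have "card e \<le> card {v}"
    using Leaf.prems(2) by (intro card_mono) auto
  with Leaf.prems(3) show ?case by simp
next
  case (Node l r)
  have disj: "leaves l \<inter> leaves r = {}"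
    using Node.prems(1) by simp
  have "e \<noteq> {}"
    using Node.prems(3) by auto
  consider "e \<subseteq> leaves l" | "e \<subseteq> leaves r" | "e \<inter> leaves l \<noteq> {}" "e \<inter> leaves r \<noteq> {}"
    using Node.prems(2) by auto
  then show ?case
  proof cases
    case 1
    then have "cut_charge (Node l r) e = cut_charge l e"
      using disj by (intro cut_charge_Node_within) auto
    moreover have "lca_size (Node l r) e = lca_size l e"
      using 1 by simp
    ultimately show ?thesis
      using 1 Node by simp
  next
    case 2
    then have "cut_charge (Node l r) e = cut_charge r e"
      using disj by (subst cut_charge_Node_commute, intro cut_charge_Node_within) auto
    moreover have "\<not> e \<subseteq> leaves l"
      using 2 disj \<open>e \<noteq> {}\<close> by auto
    then have "lca_size (Node l r) e = lca_size r e"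
      using 2 by simp
    ultimately show ?thesis
      using 2 Node by simp
  next
    case 3
    then have "\<not> e \<subseteq> leaves l" "\<not> e \<subseteq> leaves r"
      using disj by auto
    then have "real (lca_size (Node l r) e) = real (card (leaves (Node l r)))"
      by simp
    also have "\<dots> \<le> cut_charge (Node l r) e"
      using 3 disj cut_charge_nonneg[of l e] cut_charge_nonneg[of r e]
      by (subst cut_charge_Node_split) auto
    finally show ?thesis .
  qed
qed

lemma cut_charge_le_lca_size:
  assumes "distinct (leaves_list T)" and "beta_balanced \<beta> T" and "0 < \<beta>"
    and "x \<in> leaves T" and "y \<in> leaves T" and "x \<noteq> y"
  shows "cut_charge T {x, y} \<le> real (lca_size T {x, y}) / \<beta>"
  using assms
proof (induction T)
  case (Node l r)
  let ?L = "real (card (leaves (Node l r)))"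
  have disj: "leaves l \<inter> leaves r = {}"
    using Node.prems(1) by simp
  consider "{x, y} \<subseteq> leaves l" | "{x, y} \<subseteq> leaves r"
    | a b where "{x, y} = {a, b}" "a \<in> leaves l" "b \<in> leaves r"
    using Node.prems(4,5) by auto
  then show ?case
  proof cases
    case 1
    then have "cut_charge (Node l r) {x, y} = cut_charge l {x, y}"
      using disj by (intro cut_charge_Node_within) auto
    moreover have "lca_size (Node l r) {x, y} = lca_size l {x, y}"
      using 1 by simp
    ultimately show ?thesis
      using 1 Node by simp
  next
    case 2
    then have "cut_charge (Node l r) {x, y} = cut_charge r {x, y}"
      using disj by (subst cut_charge_Node_commute, intro cut_charge_Node_within) auto
    moreover have "lca_size (Node l r) {x, y} = lca_size r {x, y}"
      using 2 disj Node.prems(4) by auto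
    ultimately show ?thesis
      using 2 Node by simp
  next
    case 3
    then have "a \<notin> leaves r" "b \<notin> leaves l"
      using disj by auto
    have "lca_size (Node l r) {a, b} = card (leaves (Node l r))"
      using 3 \<open>a \<notin> leaves r\<close> \<open>b \<notin> leaves l\<close> by auto
    have "cut_charge (Node l r) {a, b} = ?L + cut_charge l {a, b} + cut_charge r {b, a}"
      using 3 disj by (subst cut_charge_Node_split) (auto simp: insert_commute)
    also have "\<dots> \<le> (?L / 2 + real (card (leaves l)) / (2 * \<beta>))
                    + (?L / 2 + real (card (leaves r)) / (2 * \<beta>))"
      using cut_charge_one_end_le[of l \<beta> a b] cut_charge_one_end_le[of r \<beta> b a]
        \<open>a \<in> leaves l\<close> \<open>b \<in> leaves r\<close> \<open>a \<notin> leaves r\<close> \<open>b \<notin> leaves l\<close>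
        Node.prems(1-3) by simp
    also have "\<dots> \<le> ?L / (2 * \<beta>) + ?L / (2 * \<beta>)"
      using half_plus_balanced_child_le[OF Node.prems(3)]
        beta_balanced_Node_card_leaves[OF Node.prems(2)] by (intro add_mono) blast+
    also have "\<dots> = real (lca_size (Node l r) {a, b}) / \<beta>"
      using \<open>lca_size (Node l r) {a, b} = card (leaves (Node l r))\<close> by simp
    finally show ?thesis
      unfolding \<open>{x, y} = {a, b}\<close> .
  qed
qed simp

theorem lemma3p2:
  fixes V :: "'a set" and E :: "'a set set" and w :: "'a set \<Rightarrow> real"
    and \<beta> :: real and T :: "'a hctree"
  assumes "wgraph V E w"
    and "0 < \<beta>" and "\<beta> < 1"
    and "is_hctree V T"
    and "beta_balanced \<beta> T"
  shows "hc_cost E w T \<le> Wsum V E w T \<and> Wsum V E w T \<le> (1 / \<beta>) * hc_cost E w T"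
proof -
  have edges: "\<forall>e\<in>E. e \<subseteq> V \<and> card e = 2" and w_nonneg: "\<forall>e\<in>E. 0 \<le> w e"
    and "finite V" and leaves_T: "leaves T = V" and distinct_T: "distinct (leaves_list T)"
    using assms(1,4) by (auto simp: wgraph_def is_hctree_def)
  then have "finite E"
    using finite_subset[of E "Pow V"] by auto
  have W: "Wsum V E w T = (\<Sum>e\<in>E. w e * cut_charge T e)"
    using Wsum_eq_sum_cut_charge[OF \<open>finite E\<close>] edges by blast
  have lower: "real (lca_size T e) \<le> cut_charge T e"
    and upper: "cut_charge T e \<le> real (lca_size T e) / \<beta>" if "e \<in> E" for e
  proof -
    have "e \<subseteq> leaves T" "card e = 2"
      using edges that leaves_T by auto
    then obtain x y where xy: "e = {x, y}" "x \<noteq> y" "x \<in> leaves T" "y \<in> leaves T"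
      by (auto simp: card_2_iff)
    show "real (lca_size T e) \<le> cut_charge T e"
      using lca_size_le_cut_charge[OF distinct_T \<open>e \<subseteq> leaves T\<close>] \<open>card e = 2\<close> by simp
    show "cut_charge T e \<le> real (lca_size T e) / \<beta>"
      unfolding xy(1) using cut_charge_le_lca_size[OF distinct_T assms(5,2) xy(3,4,2)] .
  qed
  have "hc_cost E w T \<le> Wsum V E w T"
    unfolding W hc_cost_def using lower w_nonneg by (intro sum_mono mult_left_mono) auto
  moreover have "Wsum V E w T \<le> (\<Sum>e\<in>E. w e * (real (lca_size T e) / \<beta>))"
    unfolding W using upper w_nonneg by (intro sum_mono mult_left_mono) auto
  ultimately show ?thesis
    by (simp add: hc_cost_def sum_distrib_left)
qed

end
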